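(* Let $(X,\mathcal A,\mu,\mu^{\otimes2},R,I,\Pi_R,G,E_0,\eta)$ be a pre-structural datum satisfying Axiom I. Assume $\{r\}\in\mathcal A$ and $F_r:=\Pi_R^{-1}(\{r\})\in\mathcal A$ for every $r\in R$, and that either (R-fin) $R$ is finite, or (R-ctbl) $R$ is countable, $\mathcal A$ is a $\sigma$-algebra and $\mu$ is $\sigma$-additive on $\mathcal A$. If $\mu(\Pi_R^{-1}(B))=\mu(B)$ for every $B\in\mathcal A$ with $B\subseteq R$, then $\mu(F_r\setminus\{r\})=0$ for every $r\in R$, and $\mu(X\setminus R)=0$.
   Context: A pre-structural datum is a tuple $(X,\mathcal A,\mu,\mu^{\otimes2},R,I,\Pi_R,G,E_0,\eta)$ where: $X$ is a nonempty set; $\mathcal A\subseteq\mathcal P(X)$ is an algebra of sets; $\mu:\mathcal A\to[0,\infty)$ is finitely additive with $\mu(\varnothing)=0$; $\mu^{\otimes2}$ is a finitely additive set function on the algebra generated by rectangles $B_1\times B_2$ ($B_i\in\mathcal A$) with $\mu^{\otimes2}(B_1\times B_2)=\mu(B_1)\mu(B_2)$; $R,I\in\mathcal A$ disjoint; $\Pi_R:X\to R$ a map; $G\subseteq X\times X$ in that product algebra; $E_0\in(0,\infty)$; $\eta\in[0,1]$. Axiom I: $\Pi_R\circ\Pi_R=\Pi_R$, $\Pi_R(r)=r$ for all $r\in R$, and $\Pi_R^{-1}(B)\in\mathcal A$ for every $B\in\mathcal A$ with $B\subseteq R$. *)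

theory Defs
  imports "HOL-Analysis.Analysis"
begin

definition prod_algebra :: "'a set \<Rightarrow> 'a set set \<Rightarrow> ('a \<times> 'a) set set" where
  "prod_algebra X A =
     \<Inter>{M. algebra (X \<times> X) M \<and> {B1 \<times> B2 | B1 B2. B1 \<in> A \<and> B2 \<in> A} \<subseteq> M}"

definition preim :: "'a set \<Rightarrow> ('a \<Rightarrow> 'a) \<Rightarrow> 'a set \<Rightarrow> 'a set" where
  "preim X P B = {x \<in> X. P x \<in> B}"

definition pre_structural_datum ::
  "'a set \<Rightarrow> 'a set set \<Rightarrow> ('a set \<Rightarrow> real) \<Rightarrow> (('a \<times> 'a) set \<Rightarrow> real) \<Rightarrow>
   'a set \<Rightarrow> 'a set \<Rightarrow> ('a \<Rightarrow> 'a) \<Rightarrow> ('a \<times> 'a) set \<Rightarrow> real \<Rightarrow> real \<Rightarrow> bool" where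
  "pre_structural_datum X A mu mu2 R I P G E0 eta \<longleftrightarrow>
     X \<noteq> {} \<and>
     algebra X A \<and>
     (\<forall>B\<in>A. 0 \<le> mu B) \<and> additive A mu \<and> mu {} = 0 \<and>
     additive (prod_algebra X A) mu2 \<and>
     (\<forall>B1\<in>A. \<forall>B2\<in>A. mu2 (B1 \<times> B2) = mu B1 * mu B2) \<and>
     R \<in> A \<and> I \<in> A \<and> R \<inter> I = {} \<and>
     (\<forall>x\<in>X. P x \<in> R) \<and>
     G \<in> prod_algebra X A \<and>
     0 < E0 \<and> 0 \<le> eta \<and> eta \<le> 1"

definition axiom_I :: "'a set \<Rightarrow> 'a set set \<Rightarrow> 'a set \<Rightarrow> ('a \<Rightarrow> 'a) \<Rightarrow> bool" where
  "axiom_I X A R P \<longleftrightarrow>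
     (\<forall>x\<in>X. P (P x) = P x) \<and> (\<forall>r\<in>R. P r = r) \<and>
     (\<forall>B\<in>A. B \<subseteq> R \<longrightarrow> preim X P B \<in> A)"

definition sigma_additive_real :: "'a set set \<Rightarrow> ('a set \<Rightarrow> real) \<Rightarrow> bool" where
  "sigma_additive_real A mu \<longleftrightarrow>
     (\<forall>F :: nat \<Rightarrow> 'a set. range F \<subseteq> A \<longrightarrow> disjoint_family F \<longrightarrow> (\<Union>i. F i) \<in> A \<longrightarrow>
        (\<lambda>i. mu (F i)) sums mu (\<Union>i. F i))"

end

theory Submission
  imports Defs
begin

text \<open>Measure preservation gives \<open>\<mu>(F\<^sub>r) = \<mu>{r}\<close> and \<open>\<mu>(X) = \<mu>(R)\<close>, while
  \<open>{r} \<subseteq> F\<^sub>r\<close> and \<open>R \<subseteq> X\<close> because \<open>\<Pi>\<^sub>R\<close> fixes \<open>R\<close> pointwise; finite additivity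
  then forces the differences to be null.\<close>

lemma (in algebra) additive_Diff_eq_zero:
  fixes f :: "'a set \<Rightarrow> 'b::cancel_comm_monoid_add"
  assumes "additive M f" "S \<in> M" "T \<in> M" "S \<subseteq> T" "f T = f S"
  shows "f (T - S) = 0"
proof -
  have "T = S \<union> (T - S)" using \<open>S \<subseteq> T\<close> by auto
  then have "f T = f S + f (T - S)"
    using assms(1-3) by (metis Diff Diff_disjoint additive_def)
  with \<open>f T = f S\<close> show ?thesis by simp
qed

lemma preim_eq_space: "(\<forall>x\<in>X. P x \<in> R) \<Longrightarrow> preim X P R = X"
  unfolding preim_def by auto

lemma singleton_subset_preim:
  "r \<in> X \<Longrightarrow> P r = r \<Longrightarrow> {r} \<subseteq> preim X P {r}"
  unfolding preim_def by auto

theorem proposition8p15: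
  fixes X :: "'a set" and A :: "'a set set" and mu :: "'a set \<Rightarrow> real"
    and mu2 :: "('a \<times> 'a) set \<Rightarrow> real" and R I :: "'a set" and P :: "'a \<Rightarrow> 'a"
    and G :: "('a \<times> 'a) set" and E0 eta :: real
  assumes datum: "pre_structural_datum X A mu mu2 R I P G E0 eta"
    and axI: "axiom_I X A R P"
    and sing: "\<forall>r\<in>R. {r} \<in> A"
    and fibre: "\<forall>r\<in>R. preim X P {r} \<in> A"
    and R_cases: "finite R \<or> (countable R \<and> sigma_algebra X A \<and> sigma_additive_real A mu)"
    and pres: "\<forall>B\<in>A. B \<subseteq> R \<longrightarrow> mu (preim X P B) = mu B"
  shows "(\<forall>r\<in>R. mu (preim X P {r} - {r}) = 0) \<and> mu (X - R) = 0"
proof -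
  have alg: "algebra X A" and add: "additive A mu" and RA: "R \<in> A"
    and PR: "\<forall>x\<in>X. P x \<in> R"
    using datum unfolding pre_structural_datum_def by auto
  interpret algebra X A by (rule alg)
  have RX: "R \<subseteq> X" using RA sets_into_space by blast
  have fixR: "\<forall>r\<in>R. P r = r" using axI unfolding axiom_I_def by blast
  have "mu (preim X P {r} - {r}) = 0" if "r \<in> R" for r
    using that sing fibre pres RX fixR
    by (intro additive_Diff_eq_zero[OF add] singleton_subset_preim) auto
  moreover have "mu (X - R) = 0"
    using RA pres preim_eq_space[OF PR] RX
    by (intro additive_Diff_eq_zero[OF add]) auto
  ultimately show ?thesis by blast
qed

end
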